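(* Let $(X,T)$ be a weakly mixing topological dynamical system. Then either $BP(X,T)=X^2$ (and in this case $\operatorname{supp}(X,T)$ is a singleton), or $BP(X,T)$ is a first category subset of $X\times X$ disjoint from the set of transitive points of $(X^2,T\times T)$.
   Context: A topological dynamical system $(X,T)$ consists of a non-empty compact metric space $(X,d)$ and a continuous map $T:X\to X$. It is weakly mixing if $(X\times X,T\times T)$ is transitive (for all non-empty open $U,V$, $\{n\ge0:U\cap (T\times T)^{-n}V\ne\emptyset\}$ is infinite). A transitive point is a point with dense forward orbit. A set $F\subset\mathbb{Z}_+$ has Banach density one if for every $\lambda<1$ there is $N\ge1$ with $\#(F\cap I)\ge\lambda\,\#(I)$ for every interval of integers $I\subset\mathbb{Z}_+$ with $\#(I)\ge N$. A pair $(x,y)$ is Banach proximal if for every $\varepsilon>0$ the set $\{n\in\mathbb{Z}_+: d(T^nx,T^ny)<\varepsilon\}$ has Banach density one; $BP(X,T)$ is the set of Banach proximal pairs. $\operatorname{supp}(X,T)$ is the smallest closed set $C\subset X$ with $\mu(C)=1$ for all $T$-invariant Borel probability measures $\mu$. *)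

theory Defs
  imports "HOL-Probability.Probability"
begin

definition tds :: "'a::metric_space set \<Rightarrow> ('a \<Rightarrow> 'a) \<Rightarrow> bool" where
  "tds X T \<longleftrightarrow> X \<noteq> {} \<and> compact X \<and> continuous_on X T \<and> T ` X \<subseteq> X"

definition prod_map :: "('a \<Rightarrow> 'a) \<Rightarrow> ('a \<times> 'a \<Rightarrow> 'a \<times> 'a)" where
  "prod_map T = (\<lambda>(x, y). (T x, T y))"

definition top_transitive :: "'b::metric_space set \<Rightarrow> ('b \<Rightarrow> 'b) \<Rightarrow> bool" where
  "top_transitive Y S \<longleftrightarrow>
     (\<forall>U V. openin (top_of_set Y) U \<and> U \<noteq> {} \<and> openin (top_of_set Y) V \<and> V \<noteq> {} \<longrightarrow>
        infinite {n::nat. U \<inter> ((S ^^ n) -` V) \<noteq> {}})"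

definition weakly_mixing :: "'a::metric_space set \<Rightarrow> ('a \<Rightarrow> 'a) \<Rightarrow> bool" where
  "weakly_mixing X T \<longleftrightarrow> top_transitive (X \<times> X) (prod_map T)"

definition transitive_points :: "'b::metric_space set \<Rightarrow> ('b \<Rightarrow> 'b) \<Rightarrow> 'b set" where
  "transitive_points Y S = {z \<in> Y. Y \<subseteq> closure {(S ^^ n) z | n. True}}"

definition banach_density_one :: "nat set \<Rightarrow> bool" where
  "banach_density_one F \<longleftrightarrow>
     (\<forall>c::real. c < 1 \<longrightarrow> (\<exists>N\<ge>1. \<forall>a L. L \<ge> N \<longrightarrow>
        real (card (F \<inter> {a..<a + L})) \<ge> c * real L))"

definition banach_proximal_pairs :: "'a::metric_space set \<Rightarrow> ('a \<Rightarrow> 'a) \<Rightarrow> ('a \<times> 'a) set" where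
  "banach_proximal_pairs X T =
     {(x, y) \<in> X \<times> X. \<forall>\<epsilon>>0. banach_density_one {n. dist ((T ^^ n) x) ((T ^^ n) y) < \<epsilon>}}"

definition invariant_measures :: "'a::metric_space set \<Rightarrow> ('a \<Rightarrow> 'a) \<Rightarrow> 'a measure set" where
  "invariant_measures X T =
     {M. sets M = sets (restrict_space borel X) \<and> prob_space M \<and>
         T \<in> measurable M M \<and> distr M M T = M}"

definition is_support :: "'a::metric_space set \<Rightarrow> ('a \<Rightarrow> 'a) \<Rightarrow> 'a set \<Rightarrow> bool" where
  "is_support X T C \<longleftrightarrow>
     closed C \<and> C \<subseteq> X \<and> (\<forall>M\<in>invariant_measures X T. emeasure M C = 1) \<and>
     (\<forall>C'. closed C' \<and> C' \<subseteq> X \<and> (\<forall>M\<in>invariant_measures X T. emeasure M C' = 1) \<longrightarrow> C \<subseteq> C')"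

definition nowhere_dense_in :: "'b topology \<Rightarrow> 'b set \<Rightarrow> bool" where
  "nowhere_dense_in Y A \<longleftrightarrow> A \<subseteq> topspace Y \<and> Y interior_of (Y closure_of A) = {}"

definition first_category_in :: "'b topology \<Rightarrow> 'b set \<Rightarrow> bool" where
  "first_category_in Y S \<longleftrightarrow>
     (\<exists>\<F>. countable \<F> \<and> (\<forall>A\<in>\<F>. nowhere_dense_in Y A) \<and> S \<subseteq> \<Union>\<F>)"

end

theory Submission
  imports Defs
begin

text \<open>Banach proximality passes from a pair \<open>(x, y)\<close> to every pair \<open>(a, b)\<close> in its orbit
  closure: on a window of times only finitely many iterates of \<open>T\<close> matter, these are
  simultaneously continuous at \<open>a\<close> and \<open>b\<close>, so a shifted window of the orbit of \<open>(x, y)\<close>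
  shadows that of \<open>(a, b)\<close>. Hence if some Banach proximal pair is a transitive point of
  \<open>T \<times> T\<close>, all pairs are Banach proximal; otherwise the Banach proximal pairs are
  non-transitive points, and in a transitive compact system these form a countable union of
  the nowhere dense sets of points whose orbit avoids a small ball. When all pairs are Banach
  proximal, a minimiser \<open>p\<close> of \<open>d(x, T x)\<close> is fixed and every orbit stays near \<open>p\<close> on a set
  of times of density one; by dominated convergence the ergodic averages of the indicator of
  a set bounded away from \<open>p\<close> show that this set is null for every invariant measure, which is
  therefore the point mass at \<open>p\<close>.\<close>

lemma funpow_prod_map: "(prod_map T ^^ n) (x, y) = ((T ^^ n) x, (T ^^ n) y)"
  by (induction n) (auto simp: prod_map_def)

lemma funpow_image_subset: "S ` Y \<subseteq> Y \<Longrightarrow> (S ^^ n) ` Y \<subseteq> Y"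
  by (induction n) auto

lemma continuous_on_funpow:
  assumes "continuous_on Y S" "S ` Y \<subseteq> Y"
  shows "continuous_on Y (S ^^ n)"
proof (induction n)
  case (Suc n)
  have "continuous_on Y ((S ^^ n) \<circ> S)"
    using assms Suc by (intro continuous_on_compose) (auto intro: continuous_on_subset)
  then show ?case by (simp only: funpow_Suc_right)
qed (simp add: continuous_on_id)

lemma funpow_fixed_point: "T p = p \<Longrightarrow> (T ^^ n) p = p"
  by (induction n) auto

lemma continuous_on_prod_map:
  assumes "continuous_on X T"
  shows "continuous_on (X \<times> X) (prod_map T)"
proof -
  have "prod_map T = (\<lambda>z. (T (fst z), T (snd z)))" unfolding prod_map_def by auto
  then show ?thesis
    using assms by (simp add: continuous_on_Pair continuous_on_compose2[OF assms continuous_on_fst]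
        continuous_on_compose2[OF assms continuous_on_snd])
qed

lemma prod_map_image_subset: "T ` X \<subseteq> X \<Longrightarrow> prod_map T ` (X \<times> X) \<subseteq> X \<times> X"
  by (auto simp: prod_map_def)

lemma banach_density_one_nonempty:
  assumes "banach_density_one F"
  shows "F \<noteq> {}"
proof -
  obtain N where "N \<ge> 1" and N: "\<forall>a L. L \<ge> N \<longrightarrow> real (card (F \<inter> {a..<a + L})) \<ge> 1/2 * real L"
    using assms[unfolded banach_density_one_def, rule_format, of "1/2"] by auto
  then have "real (card (F \<inter> {0..<N})) \<ge> 1/2 * real N" using N[rule_format, of N 0] by simp
  moreover have "1/2 * real N > 0" using \<open>N \<ge> 1\<close> by simp
  ultimately have "card (F \<inter> {0..<N}) > 0" by linarith
  then show ?thesis by auto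
qed

lemma banach_density_one_complement_density_zero:
  assumes "banach_density_one F"
  shows "(\<lambda>N. real (card ({..<Suc N} - F)) / real (Suc N)) \<longlonglongrightarrow> 0"
proof (rule LIMSEQ_I)
  fix r :: real assume r: "r > 0"
  obtain N where N: "\<forall>a L. L \<ge> N \<longrightarrow> real (card (F \<inter> {a..<a + L})) \<ge> (1 - r/2) * real L"
    using assms[unfolded banach_density_one_def, rule_format, of "1 - r/2"] r by auto
  have "norm (real (card ({..<Suc n} - F)) / real (Suc n)) < r" if "n \<ge> N" for n
  proof -
    have "card (F \<inter> {0..<Suc n}) \<le> Suc n"
      using card_mono[of "{0..<Suc n}" "F \<inter> {0..<Suc n}"] by auto
    moreover have "card ({..<Suc n} - F) = Suc n - card (F \<inter> {0..<Suc n})"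
      by (subst card_Diff_subset_Int) (auto simp: atLeast0LessThan Int_commute)
    ultimately have "real (card ({..<Suc n} - F)) = real (Suc n) - real (card (F \<inter> {0..<Suc n}))"
      by (simp add: of_nat_diff)
    moreover have "real (card (F \<inter> {0..<Suc n})) \<ge> (1 - r/2) * real (Suc n)"
      using N[rule_format, of "Suc n" 0] that by simp
    moreover have "(1 - r/2) * real (Suc n) = real (Suc n) - r/2 * real (Suc n)"
      by (simp add: left_diff_distrib)
    ultimately have "real (card ({..<Suc n} - F)) \<le> r/2 * real (Suc n)"
      by linarith
    then have "real (card ({..<Suc n} - F)) / real (Suc n) \<le> r/2"
      by (simp add: divide_le_eq)
    moreover have "0 \<le> real (card ({..<Suc n} - F)) / real (Suc n)" by simp
    ultimately show ?thesis using r by (simp only: real_norm_def abs_of_nonneg)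
  qed
  then show "\<exists>N. \<forall>n\<ge>N. norm (real (card ({..<Suc n} - F)) / real (Suc n) - 0) < r"
    by auto
qed

lemma banach_density_one_transfer:
  assumes F: "banach_density_one F"
    and shift: "\<And>a L. \<exists>k. \<forall>n\<in>{a..<a + L}. n + k \<in> F \<longrightarrow> n \<in> G"
  shows "banach_density_one G"
  unfolding banach_density_one_def
proof (intro allI impI)
  fix c :: real assume "c < 1"
  then obtain N where "N \<ge> 1" and N: "\<And>a L. L \<ge> N \<Longrightarrow> real (card (F \<inter> {a..<a + L})) \<ge> c * real L"
    using F unfolding banach_density_one_def by blast
  have "c * real L \<le> real (card (G \<inter> {a..<a + L}))" if "L \<ge> N" for a L
  proof -
    obtain k where k: "\<forall>n\<in>{a..<a + L}. n + k \<in> F \<longrightarrow> n \<in> G" using shift by blast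
    have "F \<inter> {a + k..<a + k + L} \<subseteq> (\<lambda>n. n + k) ` (G \<inter> {a..<a + L})"
    proof
      fix m assume m: "m \<in> F \<inter> {a + k..<a + k + L}"
      then have "m - k \<in> {a..<a + L}" and "m - k + k \<in> F" by auto
      then have "m - k \<in> G \<inter> {a..<a + L}" using k by blast
      then show "m \<in> (\<lambda>n. n + k) ` (G \<inter> {a..<a + L})" using m by (intro image_eqI[of _ _ "m - k"]) auto
    qed
    then have "card (F \<inter> {a + k..<a + k + L}) \<le> card (G \<inter> {a..<a + L})"
      by (metis card_image_le card_mono finite_Int finite_atLeastLessThan finite_imageI le_trans)
    then show ?thesis using N[OF that, of "a + k"] by linarith
  qed
  then show "\<exists>N\<ge>1. \<forall>a L. N \<le> L \<longrightarrow> c * real L \<le> real (card (G \<inter> {a..<a + L}))"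
    using \<open>N \<ge> 1\<close> by blast
qed

lemma banach_density_one_mono:
  assumes "banach_density_one F" "F \<subseteq> G"
  shows "banach_density_one G"
  by (rule banach_density_one_transfer[OF assms(1)], rule exI[of _ 0]) (use assms(2) in auto)

lemma continuous_on_finite_family_delta:
  fixes f :: "'i \<Rightarrow> 'a::metric_space \<Rightarrow> 'b::metric_space"
  assumes "finite I" "\<And>n. n \<in> I \<Longrightarrow> continuous_on X (f n)" "a \<in> X" "e > 0"
  shows "\<exists>d>0. \<forall>n\<in>I. \<forall>u\<in>X. dist u a < d \<longrightarrow> dist (f n u) (f n a) < e"
  using assms(1,2)
proof (induction I rule: finite_induct)
  case empty
  show ?case using zero_less_one by blast
next
  case (insert m I)
  then obtain d where d: "d > 0" "\<forall>n\<in>I. \<forall>u\<in>X. dist u a < d \<longrightarrow> dist (f n u) (f n a) < e"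
    by blast
  obtain d' where d': "d' > 0" "\<forall>u\<in>X. dist u a < d' \<longrightarrow> dist (f m u) (f m a) < e"
    using insert.prems[of m] assms(3,4) unfolding continuous_on_iff by blast
  show ?case using d d' by (intro exI[of _ "min d d'"]) auto
qed

lemma banach_proximal_pairs_orbit_closure:
  fixes X :: "'a::metric_space set" and T :: "'a \<Rightarrow> 'a"
  assumes tds: "tds X T" and xy: "(x, y) \<in> banach_proximal_pairs X T"
    and ab: "(a, b) \<in> X \<times> X" "(a, b) \<in> closure {(prod_map T ^^ n) (x, y) | n. True}"
  shows "(a, b) \<in> banach_proximal_pairs X T"
proof -
  have cT: "continuous_on X T" and TX: "T ` X \<subseteq> X" using tds unfolding tds_def by auto
  have xyX: "x \<in> X" "y \<in> X" using xy unfolding banach_proximal_pairs_def by auto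
  have "banach_density_one {n. dist ((T ^^ n) a) ((T ^^ n) b) < e}" if e: "e > 0" for e
  proof (rule banach_density_one_transfer)
    have "\<forall>\<epsilon>>0. banach_density_one {n. dist ((T ^^ n) x) ((T ^^ n) y) < \<epsilon>}"
      using xy unfolding banach_proximal_pairs_def by auto
    then show "banach_density_one {n. dist ((T ^^ n) x) ((T ^^ n) y) < e/2}"
      using e half_gt_zero by blast
    fix i L :: nat
    have cn: "continuous_on X (T ^^ n)" for n using continuous_on_funpow[OF cT TX] .
    obtain da where da: "da > 0"
      "\<forall>n\<in>{i..<i + L}. \<forall>u\<in>X. dist u a < da \<longrightarrow> dist ((T ^^ n) u) ((T ^^ n) a) < e/4"
      using continuous_on_finite_family_delta[of "{i..<i + L}" X "\<lambda>n. T ^^ n" a "e/4"] cn ab e by auto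
    obtain db where db: "db > 0"
      "\<forall>n\<in>{i..<i + L}. \<forall>u\<in>X. dist u b < db \<longrightarrow> dist ((T ^^ n) u) ((T ^^ n) b) < e/4"
      using continuous_on_finite_family_delta[of "{i..<i + L}" X "\<lambda>n. T ^^ n" b "e/4"] cn ab e by auto
    obtain w where "w \<in> {(prod_map T ^^ n) (x, y) | n. True}" and w: "dist w (a, b) < min da db"
      using ab(2) da(1) db(1) unfolding closure_approachable by (metis min_def)
    then obtain k where wk: "w = ((T ^^ k) x, (T ^^ k) y)" by (auto simp: funpow_prod_map)
    have k: "dist ((T ^^ k) x) a < min da db" "dist ((T ^^ k) y) b < min da db"
      using dist_fst_le[of w "(a, b)"] dist_snd_le[of w "(a, b)"] w unfolding wk by auto
    have kX: "(T ^^ k) x \<in> X" "(T ^^ k) y \<in> X" using funpow_image_subset[OF TX] xyX by blast+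
    show "\<exists>k. \<forall>n\<in>{i..<i + L}. n + k \<in> {n. dist ((T ^^ n) x) ((T ^^ n) y) < e/2}
                \<longrightarrow> n \<in> {n. dist ((T ^^ n) a) ((T ^^ n) b) < e}"
    proof (intro exI ballI impI CollectI)
      fix n assume n: "n \<in> {i..<i + L}" and "n + k \<in> {n. dist ((T ^^ n) x) ((T ^^ n) y) < e/2}"
      then have "dist ((T ^^ n) ((T ^^ k) x)) ((T ^^ n) ((T ^^ k) y)) < e/2"
        by (simp add: funpow_add)
      moreover have "dist ((T ^^ n) ((T ^^ k) x)) ((T ^^ n) a) < e/4"
        using da(2) n kX k by auto
      moreover have "dist ((T ^^ n) ((T ^^ k) y)) ((T ^^ n) b) < e/4"
        using db(2) n kX k by auto
      ultimately show "dist ((T ^^ n) a) ((T ^^ n) b) < e"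
        using dist_triangle[of "(T ^^ n) a" "(T ^^ n) ((T ^^ k) y)" "(T ^^ n) ((T ^^ k) x)"]
          dist_triangle[of "(T ^^ n) a" "(T ^^ n) b" "(T ^^ n) ((T ^^ k) y)"]
        by (simp add: dist_commute)
    qed
  qed
  then show ?thesis using ab(1) unfolding banach_proximal_pairs_def by auto
qed

lemma banach_proximal_transitive_point_imp_all:
  fixes X :: "'a::metric_space set" and T :: "'a \<Rightarrow> 'a"
  assumes "tds X T" and "z \<in> banach_proximal_pairs X T"
    and "z \<in> transitive_points (X \<times> X) (prod_map T)"
  shows "banach_proximal_pairs X T = X \<times> X"
proof
  show "banach_proximal_pairs X T \<subseteq> X \<times> X" unfolding banach_proximal_pairs_def by auto
  obtain x y where z: "z = (x, y)" by fastforce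
  show "X \<times> X \<subseteq> banach_proximal_pairs X T"
  proof
    fix w assume "w \<in> X \<times> X"
    moreover have "w \<in> closure {(prod_map T ^^ n) (x, y) | n. True}"
      using assms(3) \<open>w \<in> X \<times> X\<close> unfolding transitive_points_def z by blast
    ultimately show "w \<in> banach_proximal_pairs X T"
      using banach_proximal_pairs_orbit_closure[OF assms(1)] assms(2) unfolding z by (cases w) blast
  qed
qed

lemma first_category_in_mono:
  "first_category_in Y S \<Longrightarrow> S' \<subseteq> S \<Longrightarrow> first_category_in Y S'"
  unfolding first_category_in_def by (meson subset_trans)

lemma nowhere_dense_orbit_avoiding:
  fixes Y :: "'b::metric_space set" and S :: "'b \<Rightarrow> 'b"
  assumes cS: "continuous_on Y S" and SY: "S ` Y \<subseteq> Y" and tt: "top_transitive Y S"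
    and U: "openin (top_of_set Y) U" "U \<noteq> {}"
  shows "nowhere_dense_in (top_of_set Y) {z \<in> Y. \<forall>n. (S ^^ n) z \<notin> U}"
proof -
  let ?A = "{z \<in> Y. \<forall>n. (S ^^ n) z \<notin> U}"
  have "W = {}" if W: "openin (top_of_set Y) W" "W \<subseteq> top_of_set Y closure_of ?A" for W
  proof (rule ccontr)
    assume "W \<noteq> {}"
    then have "infinite {n. W \<inter> (S ^^ n) -` U \<noteq> {}}"
      using tt W(1) U unfolding top_transitive_def by blast
    then obtain n where "W \<inter> (S ^^ n) -` U \<noteq> {}"
      using not_finite_existsD by blast
    then obtain w where w: "w \<in> W" "(S ^^ n) w \<in> U" by blast
    define W' where "W' = W \<inter> (Y \<inter> (S ^^ n) -` U)"
    have "openin (top_of_set Y) W'"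
      unfolding W'_def using continuous_on_funpow[OF cS SY] funpow_image_subset[OF SY] U(1) W(1)
      by (intro openin_Int continuous_openin_preimage[where T=Y]) auto
    moreover have "w \<in> W'" "w \<in> top_of_set Y closure_of ?A"
      using w W openin_imp_subset[OF W(1)] unfolding W'_def by auto
    ultimately obtain y where "y \<in> ?A" "y \<in> W'" unfolding in_closure_of by auto
    then show False unfolding W'_def by blast
  qed
  from this[OF openin_interior_of interior_of_subset]
  have "top_of_set Y interior_of (top_of_set Y closure_of ?A) = {}" .
  then show ?thesis unfolding nowhere_dense_in_def by auto
qed

lemma first_category_nontransitive_points:
  fixes Y :: "'b::metric_space set" and S :: "'b \<Rightarrow> 'b"
  assumes "compact Y" and cS: "continuous_on Y S" and SY: "S ` Y \<subseteq> Y"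
    and tt: "top_transitive Y S"
  shows "first_category_in (top_of_set Y) (Y - transitive_points Y S)"
proof -
  have "\<forall>k::nat. \<exists>K. finite K \<and> K \<subseteq> Y \<and> Y \<subseteq> (\<Union>c\<in>K. ball c (1 / Suc k))"
    using seq_compact_imp_totally_bounded[OF compact_imp_seq_compact[OF \<open>compact Y\<close>]] by simp
  then obtain K where K: "\<And>k. finite (K k)" "\<And>k. K k \<subseteq> Y"
      "\<And>k. Y \<subseteq> (\<Union>c\<in>K k. ball c (1 / Suc k))"
    by metis
  define \<U> where "\<U> = (\<Union>k. (\<lambda>c. Y \<inter> ball c (1 / Suc k)) ` K k)"
  define avoid where "avoid U = {z \<in> Y. \<forall>n. (S ^^ n) z \<notin> U}" for U
  have "nowhere_dense_in (top_of_set Y) (avoid U)" if "U \<in> \<U>" for U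
  proof -
    obtain k c where "c \<in> K k" and U: "U = Y \<inter> ball c (1 / Suc k)"
      using \<open>U \<in> \<U>\<close> unfolding \<U>_def by blast
    then have "c \<in> U" using K(2) by auto
    then show ?thesis unfolding avoid_def U
      by (intro nowhere_dense_orbit_avoiding[OF cS SY tt]) (auto simp: openin_open_Int)
  qed
  moreover have "countable (avoid ` \<U>)"
    unfolding \<U>_def using K(1) by (intro countable_image countable_UN) (auto intro: countable_finite)
  moreover have "Y - transitive_points Y S \<subseteq> \<Union>(avoid ` \<U>)"
  proof
    fix z assume "z \<in> Y - transitive_points Y S"
    then obtain q where z: "z \<in> Y" and q: "q \<in> Y" "q \<notin> closure {(S ^^ n) z | n. True}"
      unfolding transitive_points_def by auto
    then obtain e where "e > 0" and e: "\<And>n. e \<le> dist ((S ^^ n) z) q"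
      unfolding closure_approachable by (auto simp: not_less)
    then obtain k where k: "1 / Suc k < e / 2" by (metis half_gt_zero nat_approx_posE)
    obtain c where c: "c \<in> K k" "dist c q < 1 / Suc k" using K(3) q(1) by force
    have "z \<in> avoid (Y \<inter> ball c (1 / Suc k))"
    proof -
      have "(S ^^ n) z \<notin> ball c (1 / Suc k)" for n
        using e[of n] c(2) k dist_triangle3[of "(S ^^ n) z" q c] by auto
      then show ?thesis using z unfolding avoid_def by blast
    qed
    then show "z \<in> \<Union>(avoid ` \<U>)" using c(1) unfolding \<U>_def by blast
  qed
  ultimately show ?thesis unfolding first_category_in_def by blast
qed

lemma measurable_funpow: "T \<in> M \<rightarrow>\<^sub>M M \<Longrightarrow> T ^^ n \<in> M \<rightarrow>\<^sub>M M"
  by (induction n) (simp_all add: funpow_Suc_right)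

lemma distr_funpow_eq:
  assumes "T \<in> M \<rightarrow>\<^sub>M M" "distr M M T = M"
  shows "distr M M (T ^^ n) = M"
proof (induction n)
  case 0
  show ?case by (simp add: distr_id2 sets_eq_imp_space_eq)
next
  case (Suc n)
  have "distr M M (T ^^ Suc n) = distr M M ((T ^^ n) \<circ> T)"
    by (simp only: funpow_Suc_right)
  also have "\<dots> = distr (distr M M T) M (T ^^ n)"
    using assms(1) measurable_funpow[OF assms(1)] by (simp add: distr_distr)
  also have "\<dots> = M" using assms(2) Suc by simp
  finally show ?case .
qed

lemma sum_indicator_funpow_eq_card:
  "(\<Sum>n<N. indicator A ((T ^^ n) x) :: real) = real (card ({..<N} - {n. (T ^^ n) x \<notin> A}))"
proof -
  have "{..<N} - {n. (T ^^ n) x \<notin> A} = {..<N} \<inter> {n. (T ^^ n) x \<in> A}" by auto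
  then show ?thesis
    using sum_indicator_eq_card[of "{..<N}" "{n. (T ^^ n) x \<in> A}"]
    by (simp add: of_nat_sum[symmetric] real_of_nat_indicator indicator_def)
qed

lemma (in prob_space) prob_eq_0_if_rarely_visited:
  assumes T: "T \<in> M \<rightarrow>\<^sub>M M" "distr M M T = M" and A: "A \<in> sets M"
    and rare: "\<And>x. x \<in> space M \<Longrightarrow> banach_density_one {n. (T ^^ n) x \<notin> A}"
  shows "prob A = 0"
proof -
  define avg where "avg N x = (\<Sum>n<Suc N. indicator A ((T ^^ n) x)) / real (Suc N)" for N x
  have visit_measurable: "(\<lambda>x. indicator A ((T ^^ n) x) :: real) \<in> borel_measurable M" for n
    by (rule measurable_compose[OF measurable_funpow[OF T(1)] borel_measurable_indicator[OF A]])
  have "(\<integral>x. indicator A ((T ^^ n) x) \<partial>M) = prob A" for n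
    using A measurable_funpow[OF T(1)] distr_funpow_eq[OF T]
    by (subst integral_distr[symmetric]) auto
  moreover have "integrable M (\<lambda>x. indicator A ((T ^^ n) x) :: real)" for n
    by (rule integrable_const_bound[where B=1]) (auto simp: visit_measurable)
  ultimately have integral_avg: "(\<integral>x. avg N x \<partial>M) = prob A" for N
    unfolding avg_def by (simp add: field_simps)
  have avg_le_1: "norm (avg N x) \<le> 1" for N x
  proof -
    have "(\<Sum>n<Suc N. indicator A ((T ^^ n) x) :: real) \<le> (\<Sum>n<Suc N. 1)"
      by (intro sum_mono) (simp add: indicator_def)
    then show ?thesis unfolding avg_def by (simp add: sum_nonneg)
  qed
  have avg_tendsto_0: "(\<lambda>N. avg N x) \<longlonglongrightarrow> 0" if "x \<in> space M" for x
    unfolding avg_def sum_indicator_funpow_eq_card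
    by (rule banach_density_one_complement_density_zero[OF rare[OF that]])
  have "(\<lambda>N. \<integral>x. avg N x \<partial>M) \<longlonglongrightarrow> (\<integral>x. 0 \<partial>M)"
    by (rule integral_dominated_convergence[where w="\<lambda>_. 1"])
       (use avg_le_1 avg_tendsto_0 visit_measurable in \<open>auto simp: avg_def\<close>)
  then show ?thesis unfolding integral_avg by (simp add: LIMSEQ_const_iff)
qed

lemma fixed_point_if_all_pairs_banach_proximal:
  fixes X :: "'a::metric_space set" and T :: "'a \<Rightarrow> 'a"
  assumes tds: "tds X T" and all: "banach_proximal_pairs X T = X \<times> X"
  shows "\<exists>p\<in>X. T p = p"
proof -
  have "X \<noteq> {}" "compact X" and cT: "continuous_on X T" and TX: "T ` X \<subseteq> X"
    using tds unfolding tds_def by auto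
  have "continuous_on X (\<lambda>x. dist x (T x))" using cT by (intro continuous_intros) auto
  then obtain p where p: "p \<in> X" and min: "\<forall>y\<in>X. dist p (T p) \<le> dist y (T y)"
    using continuous_attains_inf[OF \<open>compact X\<close> \<open>X \<noteq> {}\<close>] by blast
  have "T p = p"
  proof (rule ccontr)
    assume "T p \<noteq> p"
    moreover have "(p, T p) \<in> banach_proximal_pairs X T" using all p TX by auto
    ultimately have "banach_density_one {n. dist ((T ^^ n) p) ((T ^^ n) (T p)) < dist p (T p)}"
      unfolding banach_proximal_pairs_def by auto
    then obtain n where "dist ((T ^^ n) p) (T ((T ^^ n) p)) < dist p (T p)"
      using banach_density_one_nonempty by (auto simp: funpow_swap1)
    moreover have "(T ^^ n) p \<in> X" using funpow_image_subset[OF TX] p by blast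
    ultimately show False using min by (meson not_le)
  qed
  then show ?thesis using p by blast
qed

lemma invariant_measure_eq_point_mass:
  fixes X :: "'a::metric_space set" and T :: "'a \<Rightarrow> 'a"
  assumes tds: "tds X T" and p: "p \<in> X" "T p = p"
    and proximal: "\<And>x. x \<in> X \<Longrightarrow> (x, p) \<in> banach_proximal_pairs X T"
    and M: "M \<in> invariant_measures X T"
  shows "emeasure M {p} = 1"
proof -
  have sets: "sets M = sets (restrict_space borel X)" and "prob_space M"
    and T: "T \<in> M \<rightarrow>\<^sub>M M" "distr M M T = M"
    using M unfolding invariant_measures_def by auto
  interpret prob_space M by fact
  have space: "space M = X"
    using sets_eq_imp_space_eq[OF sets] by (simp add: space_restrict_space)
  have "closed X" using tds compact_imp_closed unfolding tds_def by blast
  then have borel_sets: "B \<in> sets M" if "B \<subseteq> X" "B \<in> sets borel" for B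
    unfolding sets using that by (subst sets_restrict_space_iff) auto
  define far where "far k = {y \<in> X. 1 / Suc k \<le> dist y p}" for k :: nat
  have far_sets: "far k \<in> sets M" for k
  proof -
    have "closed {y. 1 / Suc k \<le> dist y p}" by (intro closed_Collect_le continuous_intros)
    then show ?thesis unfolding far_def
      using borel_sets[of "X \<inter> {y. 1 / Suc k \<le> dist y p}"] \<open>closed X\<close> by (simp add: Collect_conj_eq)
  qed
  have "prob (far k) = 0" for k
  proof (rule prob_eq_0_if_rarely_visited[OF T far_sets])
    fix x assume "x \<in> space M"
    then have "banach_density_one {n. dist ((T ^^ n) x) ((T ^^ n) p) < 1 / Suc k}"
      using proximal unfolding space banach_proximal_pairs_def by auto
    then show "banach_density_one {n. (T ^^ n) x \<notin> far k}"
      by (rule banach_density_one_mono) (auto simp: far_def funpow_fixed_point[of T p, OF p(2)])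
  qed
  then have "emeasure M (\<Union>k. far k) = 0"
    using far_sets by (intro emeasure_UN_eq_0) (auto simp: emeasure_eq_measure)
  moreover have "(\<Union>k. far k) = space M - {p}"
  proof
    show "space M - {p} \<subseteq> (\<Union>k. far k)"
    proof
      fix y assume y: "y \<in> space M - {p}"
      then have "dist y p > 0" by simp
      then obtain k where "1 / Suc k < dist y p" by (rule nat_approx_posE)
      then have "y \<in> far k" using y unfolding far_def space by auto
      then show "y \<in> (\<Union>k. far k)" by blast
    qed
  qed (auto simp: far_def space)
  ultimately have "prob (space M - {p}) = 0" by (simp add: measure_def)
  then show ?thesis
    using prob_compl[of "{p}"] borel_sets[of "{p}"] p(1) by (simp add: emeasure_eq_measure)
qed

lemma return_fixed_point_invariant:
  fixes X :: "'a::metric_space set" and T :: "'a \<Rightarrow> 'a"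
  assumes tds: "tds X T" and p: "p \<in> X" "T p = p"
  shows "return (restrict_space borel X) p \<in> invariant_measures X T"
proof -
  define B where "B = restrict_space borel X"
  define D where "D = return B p"
  have cT: "continuous_on X T" and TX: "T ` X \<subseteq> X" using tds unfolding tds_def by auto
  have space: "space B = X" unfolding B_def by (simp add: space_restrict_space)
  have T: "T \<in> B \<rightarrow>\<^sub>M B" unfolding B_def
    by (rule measurable_restrict_space2)
       (use TX borel_measurable_continuous_on_restrict[OF cT] in \<open>auto simp: space_restrict_space\<close>)
  have sets_D: "sets D = sets B" unfolding D_def by simp
  have "distr D D T = return D (T p)"
    unfolding D_def using T p space measurable_cong_sets[OF refl sets_D[unfolded D_def]]
    by (intro distr_return) auto
  also have "\<dots> = D" unfolding D_def p(2) by (rule return_cong) simp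
  finally have "distr D D T = D" .
  moreover have "prob_space D" unfolding D_def using p space by (intro prob_space_return) simp
  moreover have "T \<in> D \<rightarrow>\<^sub>M D" using T measurable_cong_sets[OF sets_D sets_D] by blast
  ultimately show ?thesis
    using sets_D unfolding invariant_measures_def B_def D_def by blast
qed

lemma is_support_singleton_fixed_point:
  fixes X :: "'a::metric_space set" and T :: "'a \<Rightarrow> 'a"
  assumes tds: "tds X T" and p: "p \<in> X" "T p = p"
    and point_mass: "\<And>M. M \<in> invariant_measures X T \<Longrightarrow> emeasure M {p} = 1"
  shows "is_support X T {p}"
  unfolding is_support_def
proof (intro conjI allI impI ballI)
  show "closed {p}" "{p} \<subseteq> X" using p(1) by auto
  show "emeasure M {p} = 1" if "M \<in> invariant_measures X T" for M using point_mass that .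
next
  fix C assume C: "closed C \<and> C \<subseteq> X \<and> (\<forall>M\<in>invariant_measures X T. emeasure M C = 1)"
  then have "emeasure (return (restrict_space borel X) p) C = 1"
    using return_fixed_point_invariant[OF tds p] by blast
  moreover have "C \<in> sets (restrict_space borel X)"
    using C compact_imp_closed[of X] tds unfolding tds_def by (subst sets_restrict_space_iff) auto
  ultimately show "{p} \<subseteq> C" by (cases "p \<in> C") auto
qed

theorem mainTheorem10:
  fixes X :: "'a::metric_space set" and T :: "'a \<Rightarrow> 'a"
  assumes "tds X T" and "weakly_mixing X T"
  shows "(banach_proximal_pairs X T = X \<times> X \<and> (\<exists>x. is_support X T {x}))
       \<or> (first_category_in (top_of_set (X \<times> X)) (banach_proximal_pairs X T) \<and>
          banach_proximal_pairs X T \<inter> transitive_points (X \<times> X) (prod_map T) = {})"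
proof (cases "banach_proximal_pairs X T = X \<times> X")
  case True
  then obtain p where p: "p \<in> X" "T p = p"
    using fixed_point_if_all_pairs_banach_proximal[OF assms(1)] by blast
  have "is_support X T {p}"
    using is_support_singleton_fixed_point[OF assms(1) p]
      invariant_measure_eq_point_mass[OF assms(1) p] True p(1) by blast
  with True show ?thesis by blast
next
  case False
  then have disjoint: "banach_proximal_pairs X T \<inter> transitive_points (X \<times> X) (prod_map T) = {}"
    using banach_proximal_transitive_point_imp_all[OF assms(1)] by blast
  have "compact X" "continuous_on X T" "T ` X \<subseteq> X" using assms(1) unfolding tds_def by auto
  then have "first_category_in (top_of_set (X \<times> X)) (X \<times> X - transitive_points (X \<times> X) (prod_map T))"
    using assms(2) unfolding weakly_mixing_def
    by (intro first_category_nontransitive_points compact_Times continuous_on_prod_map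
        prod_map_image_subset)
  moreover have "banach_proximal_pairs X T \<subseteq> X \<times> X - transitive_points (X \<times> X) (prod_map T)"
    using disjoint unfolding banach_proximal_pairs_def by auto
  ultimately show ?thesis using disjoint first_category_in_mono by blast
qed

end
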